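(* Under the standing assumptions, if $a<1/4$ then $\lim_{\theta\to\pi^-}g_m(\theta)$ has sign $(-1)^m$.
   Context: Standing assumptions: $a,b\in\mathbb{R}$ with $b>0$, $1+a+b>0$, $9-27a+b>0$, $2-8a+8a^2+ab\ne0$, $b+1-a\ne0$. Let $f^*(\zeta,\theta)=(\zeta+2\cos\theta)(2\zeta\cos\theta+1)+b\zeta-a(\zeta+2\cos\theta)^3$. Under these assumptions, for each $\theta\in(\pi/2,\pi)$ the polynomial $f^*(\cdot,\theta)$ has exactly one real zero in $(-1,1)$; denote it $w(\theta)$ and set $\zeta(\theta)=1/w(\theta)$. Define $$g_m(\theta)=\frac{(\zeta(\theta)-\cos\theta)\sin((m+1)\theta)}{\sin\theta}-\cos((m+1)\theta)+\frac{1}{\zeta(\theta)^{m+1}}.$$ *)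

theory Defs
  imports Complex_Main
begin

definition fstar :: "real \<Rightarrow> real \<Rightarrow> real \<Rightarrow> real \<Rightarrow> real" where
  "fstar a b z \<theta> = (z + 2 * cos \<theta>) * (2 * z * cos \<theta> + 1) + b * z - a * (z + 2 * cos \<theta>) ^ 3"

text \<open>The unique real zero of fstar in (-1,1) (exists and is unique under the standing assumptions).\<close>
definition wz :: "real \<Rightarrow> real \<Rightarrow> real \<Rightarrow> real" where
  "wz a b \<theta> = (THE z. -1 < z \<and> z < 1 \<and> fstar a b z \<theta> = 0)"

definition zeta :: "real \<Rightarrow> real \<Rightarrow> real \<Rightarrow> real" where
  "zeta a b \<theta> = 1 / wz a b \<theta>"

definition gm :: "real \<Rightarrow> real \<Rightarrow> nat \<Rightarrow> real \<Rightarrow> real" where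
  "gm a b m \<theta> = (zeta a b \<theta> - cos \<theta>) * sin ((real m + 1) * \<theta>) / sin \<theta>
      - cos ((real m + 1) * \<theta>) + 1 / zeta a b \<theta> ^ (m + 1)"

end

theory Submission imports Defs begin

text \<open>Near \<open>\<theta> = \<pi>\<close> the cubic \<open>f\<^sup>*(\<cdot>,\<theta>)\<close> is strictly increasing on \<open>[-1,1]\<close> when \<open>a < 1/4\<close>, so its
root \<open>w(\<theta>)\<close> depends continuously on \<open>cos \<theta>\<close> and tends to the root \<open>w\<^sub>0 \<in> (0,1)\<close> of
\<open>f\<^sup>*(\<cdot>,\<pi>)\<close>. Writing \<open>sin((m+1)\<theta>)/sin \<theta> = U\<^sub>m(cos \<theta>)\<close> with the Chebyshev polynomial
\<open>U\<^sub>m\<close>, the limit of \<open>g\<^sub>m\<close> is \<open>(-1)\<^sup>m((1/w\<^sub>0 + 1)(m+1) + 1) + w\<^sub>0\<^sup>m\<^sup>+\<^sup>1\<close>, whose first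
term has modulus greater than one and the second modulus less than one.\<close>

definition fcos :: "real \<Rightarrow> real \<Rightarrow> real \<Rightarrow> real \<Rightarrow> real" where
  "fcos a b z c = (z + 2 * c) * (2 * z * c + 1) + b * z - a * (z + 2 * c) ^ 3"

definition fcos_dz :: "real \<Rightarrow> real \<Rightarrow> real \<Rightarrow> real \<Rightarrow> real" where
  "fcos_dz a b z c = 4 * z * c + 1 + 4 * c ^ 2 + b - 3 * a * (z + 2 * c) ^ 2"

text \<open>At \<open>c = -1\<close> the derivative \<open>fcos_dz\<close> is at least \<open>1/4\<close> on \<open>[-1,1]\<close>, and moving \<open>c\<close>
changes it by at most \<open>(c + 1)(12 + 36\<bar>a\<bar>)\<close>; the margin keeps it positive.\<close>
definition mono_margin :: "real \<Rightarrow> real" where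
  "mono_margin a = 1 / (4 * (12 + 36 * \<bar>a\<bar>))"

lemma fstar_eq_fcos: "fstar a b z t = fcos a b z (cos t)"
  by (simp add: fstar_def fcos_def)

lemma fcos_has_derivative: "((\<lambda>z. fcos a b z c) has_real_derivative fcos_dz a b z c) (at z)"
  unfolding fcos_def fcos_dz_def
  by (rule derivative_eq_intros refl | simp)+ (simp add: power2_eq_square algebra_simps)

lemma fcos_dz_minus_one_ge:
  assumes "a < 1/4" "b > 0" "-1 \<le> z" "z \<le> 1"
  shows "1/4 \<le> fcos_dz a b z (-1)"
proof (cases "a \<le> 0")
  case True
  then have "a * (z - 2)^2 \<le> 0" by (simp add: mult_nonpos_nonneg)
  then show ?thesis using assms by (simp add: fcos_dz_def power2_eq_square algebra_simps)
next
  case False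
  have "3 * a * (z - 2)^2 \<le> 3/4 * (z - 2)^2"
    using False assms(1) by (intro mult_right_mono) auto
  moreover have "0 \<le> (1 - z) * (3 * z + 7)" using assms by (intro mult_nonneg_nonneg) auto
  ultimately show ?thesis using assms by (simp add: fcos_dz_def power2_eq_square algebra_simps)
qed

lemma fcos_dz_pos:
  assumes "a < 1/4" "b > 0" "-1 \<le> z" "z \<le> 1" "-1 \<le> c" "c + 1 < mono_margin a"
  shows "0 < fcos_dz a b z c"
proof -
  define K where "K = 12 + 36 * \<bar>a\<bar>"
  define Y where "Y = a * (2 * z + 2 * c - 2)"
  define X where "X = 4 * z + 4 * (c - 1) - 6 * Y"
  have K_ge: "12 \<le> K" unfolding K_def by simp
  have margin_eq: "mono_margin a = 1 / (4 * K)" unfolding mono_margin_def K_def ..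
  have margin_K: "mono_margin a * K = 1/4" using K_ge unfolding margin_eq by simp
  have "mono_margin a \<le> 1" using K_ge unfolding margin_eq by simp
  then have "c \<le> 0" using assms(6) by simp
  have split: "fcos_dz a b z c = fcos_dz a b z (-1) + (c + 1) * X"
    unfolding fcos_dz_def X_def Y_def by (simp add: power2_eq_square algebra_simps)
  have "\<bar>Y\<bar> \<le> \<bar>a\<bar> * 6"
    unfolding Y_def abs_mult using assms(3-5) \<open>c \<le> 0\<close> by (intro mult_left_mono) auto
  then have "\<bar>X\<bar> \<le> K"
    using assms(3-5) \<open>c \<le> 0\<close> unfolding X_def K_def abs_le_iff by auto
  then have "\<bar>(c + 1) * X\<bar> \<le> (c + 1) * K" using assms(5) by (simp add: abs_mult mult_left_mono)
  also have "\<dots> < mono_margin a * K" using assms(6) K_ge by simp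
  finally have "- ((c + 1) * X) < 1/4" using margin_K by linarith
  then show ?thesis using split fcos_dz_minus_one_ge[OF assms(1-4)] by linarith
qed

lemma fcos_strict_mono:
  assumes "a < 1/4" "b > 0" "-1 \<le> c" "c + 1 < mono_margin a"
    and "-1 \<le> z1" "z1 < z2" "z2 \<le> 1"
  shows "fcos a b z1 c < fcos a b z2 c"
  using \<open>z1 < z2\<close>
proof (rule DERIV_pos_imp_increasing)
  fix x assume "z1 \<le> x" "x \<le> z2"
  then show "\<exists>y. ((\<lambda>z. fcos a b z c) has_real_derivative y) (at x) \<and> 0 < y"
    using fcos_has_derivative fcos_dz_pos[OF assms(1,2) _ _ assms(3,4), of x] assms(5,7) by force
qed

lemma wz_eqI:
  assumes "a < 1/4" "b > 0" "-1 \<le> cos t" "cos t + 1 < mono_margin a"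
    and "-1 < x" "x < 1" "fcos a b x (cos t) = 0"
  shows "wz a b t = x"
  unfolding wz_def
proof (rule the_equality)
  show "-1 < x \<and> x < 1 \<and> fstar a b x t = 0" using assms by (simp add: fstar_eq_fcos)
next
  fix y assume y: "-1 < y \<and> y < 1 \<and> fstar a b y t = 0"
  show "y = x"
  proof (rule ccontr)
    assume "y \<noteq> x"
    then have "fcos a b (min x y) (cos t) < fcos a b (max x y) (cos t)"
      using y assms(5,6) by (intro fcos_strict_mono[OF assms(1-4)]) linarith+
    moreover have "fcos a b y (cos t) = 0" using y by (simp add: fstar_eq_fcos)
    ultimately show False using assms(7) by (simp add: min_def max_def split: if_splits)
  qed
qed

lemma fcos_root_at_minus_one:
  assumes "a < 1/4" "1 + a + b > 0"
  obtains w0 where "0 < w0" "w0 < 1" "fcos a b w0 (-1) = 0"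
proof -
  have "fcos a b 0 (-1) < 0" "0 < fcos a b 1 (-1)" using assms by (simp_all add: fcos_def)
  moreover have "continuous_on {0..1} (\<lambda>z. fcos a b z (-1))"
    unfolding fcos_def by (intro continuous_intros)
  ultimately obtain w0 where "0 \<le> w0" "w0 \<le> 1" "fcos a b w0 (-1) = 0"
    using IVT'[of "\<lambda>z. fcos a b z (-1)" 0 0 1] by force
  with \<open>fcos a b 0 (-1) < 0\<close> \<open>0 < fcos a b 1 (-1)\<close> show ?thesis
    by (intro that[of w0]) (auto simp: order.order_iff_strict)
qed

lemma cos_tendsto_at_left_pi: "((\<lambda>t. cos t) \<longlongrightarrow> -1) (at_left pi)"
  using tendsto_cos[OF tendsto_ident_at, of pi "{..<pi}"] by simp

lemma eventually_cos_near_minus_one: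
  assumes "0 < e"
  shows "eventually (\<lambda>t. cos t + 1 < e) (at_left pi)"
  using order_tendstoD(2)[OF cos_tendsto_at_left_pi, of "e - 1"] assms by (simp add: less_diff_eq)

lemma wz_tendsto:
  assumes "a < 1/4" "b > 0" "0 < w0" "w0 < 1" "fcos a b w0 (-1) = 0"
  shows "(wz a b \<longlongrightarrow> w0) (at_left pi)"
proof (rule tendstoI)
  fix \<epsilon> :: real assume "0 < \<epsilon>"
  define e where "e = min (\<epsilon> / 2) (min (w0 / 2) ((1 - w0) / 2))"
  have "0 < e" using \<open>0 < \<epsilon>\<close> assms(3,4) unfolding e_def by simp
  moreover have "e \<le> \<epsilon> / 2" "e \<le> w0 / 2" "e \<le> (1 - w0) / 2"
    unfolding e_def by (rule min.cobounded1, rule min.coboundedI2[OF min.cobounded1],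
      rule min.coboundedI2[OF min.cobounded2])
  ultimately have e: "0 < e" "e < \<epsilon>" "0 < w0 - e" "w0 + e < 1"
    using \<open>0 < \<epsilon>\<close> assms(3,4) by auto
  have margin_pos: "0 < mono_margin a" unfolding mono_margin_def by (simp add: add_pos_nonneg)
  have "fcos a b (w0 - e) (-1) < fcos a b w0 (-1)"
    using e assms(3,4) margin_pos by (intro fcos_strict_mono[OF assms(1,2)]) auto
  moreover have "fcos a b w0 (-1) < fcos a b (w0 + e) (-1)"
    using e assms(3,4) margin_pos by (intro fcos_strict_mono[OF assms(1,2)]) auto
  ultimately have below: "fcos a b (w0 - e) (-1) < 0" and above: "0 < fcos a b (w0 + e) (-1)"
    using assms(5) by auto
  have fcos_tendsto: "((\<lambda>t. fcos a b z (cos t)) \<longlongrightarrow> fcos a b z (-1)) (at_left pi)" for z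
    using cos_tendsto_at_left_pi unfolding fcos_def by (intro tendsto_intros)
  note order_tendstoD(2)[OF fcos_tendsto below] order_tendstoD(1)[OF fcos_tendsto above]
  then show "eventually (\<lambda>t. dist (wz a b t) w0 < \<epsilon>) (at_left pi)"
    using eventually_cos_near_minus_one[OF margin_pos]
  proof eventually_elim
    case (elim t)
    have "continuous_on {w0 - e..w0 + e} (\<lambda>z. fcos a b z (cos t))"
      unfolding fcos_def by (intro continuous_intros)
    then have "\<exists>x\<ge>w0 - e. x \<le> w0 + e \<and> fcos a b x (cos t) = 0"
      using elim(1,2) e(1) by (intro IVT') auto
    then obtain x where x: "w0 - e \<le> x" "x \<le> w0 + e" "fcos a b x (cos t) = 0" by blast
    then have "wz a b t = x"
      using e by (intro wz_eqI[OF assms(1,2) cos_ge_minus_one elim(3)]) auto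
    then show ?case using x e by (simp add: dist_real_def abs_le_iff)
  qed
qed

fun cheb_U :: "nat \<Rightarrow> real \<Rightarrow> real" where
  "cheb_U 0 x = 1"
| "cheb_U (Suc 0) x = 2 * x"
| "cheb_U (Suc (Suc n)) x = 2 * x * cheb_U (Suc n) x - cheb_U n x"

lemma sin_Suc_mult_eq_cheb_U: "sin ((real n + 1) * t) = sin t * cheb_U n (cos t)"
proof (induction n rule: induct_nat_012)
  case (ge2 n)
  have "sin ((real n + 3) * t) = 2 * cos t * sin ((real n + 2) * t) - sin ((real n + 1) * t)"
    using sin_add[of "(real n + 2) * t" t] sin_diff[of "(real n + 2) * t" t]
    by (simp add: algebra_simps)
  with ge2.IH show ?case by (simp add: algebra_simps)
qed (simp_all add: sin_double)

lemma isCont_cheb_U: "isCont (cheb_U n) x"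
proof (induction n rule: induct_nat_012)
  case (ge2 n)
  have "cheb_U (Suc (Suc n)) = (\<lambda>x. 2 * x * cheb_U (Suc n) x - cheb_U n x)" by auto
  with ge2.IH show ?case by (simp add: continuous_intros)
qed (simp_all add: cheb_U.simps[abs_def])

lemma cheb_U_minus_one: "cheb_U n (-1) = (-1) ^ n * (real n + 1)"
  by (induction n rule: induct_nat_012) (simp_all add: algebra_simps)

lemma gm_eq_cheb_U:
  assumes "sin t \<noteq> 0"
  shows "gm a b m t = (zeta a b t - cos t) * cheb_U m (cos t) - cos ((real m + 1) * t)
    + 1 / zeta a b t ^ (m + 1)"
  using assms by (simp add: gm_def sin_Suc_mult_eq_cheb_U)

lemma sgn_alternating_plus_small:
  fixes A r :: real
  assumes "1 \<le> A" "\<bar>r\<bar> < 1"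
  shows "sgn ((-1) ^ m * A + r) = (-1) ^ m"
  using assms by (cases "even m") (auto simp: sgn_if)

theorem mainTheorem19:
  fixes a b :: real and m :: nat
  assumes "b > 0" and "1 + a + b > 0" and "9 - 27 * a + b > 0"
    and "2 - 8 * a + 8 * a ^ 2 + a * b \<noteq> 0" and "b + 1 - a \<noteq> 0"
    and "a < 1 / 4"
  shows "\<exists>L. (gm a b m \<longlongrightarrow> L) (at_left pi) \<and> sgn L = (-1) ^ m"
proof -
  define G where "G t = (zeta a b t - cos t) * cheb_U m (cos t) - cos ((real m + 1) * t)
    + 1 / zeta a b t ^ (m + 1)" for t
  obtain w0 where w0: "0 < w0" "w0 < 1" "fcos a b w0 (-1) = 0"
    using fcos_root_at_minus_one[OF assms(6,2)] by blast
  have "(zeta a b \<longlongrightarrow> 1 / w0) (at_left pi)"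
    unfolding zeta_def[abs_def] using wz_tendsto[OF assms(6,1) w0] w0 by (intro tendsto_intros) auto
  then have "(G \<longlongrightarrow> (1 / w0 + 1) * cheb_U m (-1) - cos ((real m + 1) * pi) + w0 ^ (m + 1))
      (at_left pi)"
    using isCont_tendsto_compose[OF isCont_cheb_U cos_tendsto_at_left_pi] cos_tendsto_at_left_pi w0
    unfolding G_def[abs_def] by (auto intro!: tendsto_eq_intros simp: power_one_over)
  moreover have "eventually (\<lambda>t. G t = gm a b m t) (at_left pi)"
    using eventually_at_left_real[OF pi_gt_zero] unfolding G_def
    by eventually_elim (metis gm_eq_cheb_U sin_gt_zero less_irrefl greaterThanLessThan_iff)
  moreover have "cos ((real m + 1) * pi) = (-1) ^ Suc m"
    using cos_npi[of "Suc m"] by (simp add: add.commute)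
  ultimately have "(gm a b m \<longlongrightarrow> (-1) ^ m * ((1 / w0 + 1) * (real m + 1) + 1) + w0 ^ (m + 1))
      (at_left pi)"
    by (simp add: tendsto_cong cheb_U_minus_one algebra_simps)
  moreover have "sgn ((-1) ^ m * ((1 / w0 + 1) * (real m + 1) + 1) + w0 ^ (m + 1)) = (-1) ^ m"
    using w0 power_Suc_less_one[OF w0(1,2), of m]
    by (intro sgn_alternating_plus_small) (auto simp del: power_Suc)
  ultimately show ?thesis by blast
qed

end
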